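(* Let $\mathcal{G}=(G,\odot,\leq)$ be a real continuous Alo-group with $G$ an open interval of $\mathbb{R}$, and let $\tilde A$ be an $n\times n$ $[\mathcal{G}]$-reciprocal IPCM. Then: (1) if $\tilde A$ is Liu's $[\mathcal{G}]$-consistent, then $\tilde A$ is approximately $[\mathcal{G}]$-consistent; (2) if $\tilde A$ is approximately $[\mathcal{G}]$-consistent, then $\tilde A$ is $[\mathcal{G}]$-consistent.
   Context: An Alo-group $(G,\odot,\leq)$ is an Abelian group with identity $e$ and a weak order $\leq$ such that $a\leq b\Rightarrow a\odot c\leq b\odot c$; real means $G\subseteq\mathbb{R}$ with usual order, continuous means $\odot$ is continuous. $[G]=\{[a^-,a^+]: a^-,a^+\in G,\ a^-\leq a^+\}$; $\tilde a^{(-1)}=[(a^+)^{(-1)},(a^-)^{(-1)}]$; $\tilde a\odot_{[G]}\tilde b=\{a\odot b: a\in\tilde a,b\in\tilde b\}$. An IPCM $\tilde A=([a^-_{ij},a^+_{ij}])$ is an $n\times n$ matrix with entries in $[G]$; $[\mathcal{G}]$-reciprocal means $\tilde a_{ji}=\tilde a_{ij}^{(-1)}$. A PCM $(c_{ij})$ over $G$ is $\mathcal{G}$-consistent if $c_{ik}=c_{ij}\odot c_{jk}$ for all $i,j,k$. For a permutation $\sigma$ of $\{1,\dots,n\}$, let $l^\sigma_{ij}=a^-_{\sigma(i)\sigma(j)}$ if $i<j$, $e$ if $i=j$, $a^+_{\sigma(i)\sigma(j)}$ if $i>j$, and $r^\sigma_{ij}=a^+_{\sigma(i)\sigma(j)}$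 if $i<j$, $e$ if $i=j$, $a^-_{\sigma(i)\sigma(j)}$ if $i>j$. $\tilde A$ is Liu's $[\mathcal{G}]$-consistent if $L^\sigma=(l^\sigma_{ij})$ and $R^\sigma=(r^\sigma_{ij})$ are $\mathcal{G}$-consistent for $\sigma$ the identity permutation; approximately $[\mathcal{G}]$-consistent if there exists a permutation $\sigma$ such that $L^\sigma$ and $R^\sigma$ are $\mathcal{G}$-consistent; and $[\mathcal{G}]$-consistent if $\tilde a_{ij}\odot_{[G]}\tilde a_{jk}\odot_{[G]}\tilde a_{ki}=\tilde a_{ik}\odot_{[G]}\tilde a_{kj}\odot_{[G]}\tilde a_{ji}$ for all $i,j,k$. *)

theory Defs
  imports "HOL-Analysis.Analysis" "HOL-Combinatorics.Permutations"
begin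

definition real_alo_group :: "real set \<Rightarrow> (real \<Rightarrow> real \<Rightarrow> real) \<Rightarrow> real \<Rightarrow> bool" where
  "real_alo_group G f e \<longleftrightarrow>
     (\<forall>a\<in>G. \<forall>b\<in>G. f a b \<in> G) \<and>
     (\<forall>a\<in>G. \<forall>b\<in>G. \<forall>c\<in>G. f (f a b) c = f a (f b c)) \<and>
     (\<forall>a\<in>G. \<forall>b\<in>G. f a b = f b a) \<and>
     e \<in> G \<and> (\<forall>a\<in>G. f a e = a) \<and>
     (\<forall>a\<in>G. \<exists>b\<in>G. f a b = e) \<and>
     (\<forall>a\<in>G. \<forall>b\<in>G. \<forall>c\<in>G. a \<le> b \<longrightarrow> f a c \<le> f b c)"

definition continuous_alo :: "real set \<Rightarrow> (real \<Rightarrow> real \<Rightarrow> real) \<Rightarrow> bool" where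
  "continuous_alo G f \<longleftrightarrow> continuous_on (G \<times> G) (\<lambda>(x, y). f x y)"

definition open_real_interval :: "real set \<Rightarrow> bool" where
  "open_real_interval G \<longleftrightarrow> G \<noteq> {} \<and> open G \<and> is_interval G"

definition alo_inv :: "real set \<Rightarrow> (real \<Rightarrow> real \<Rightarrow> real) \<Rightarrow> real \<Rightarrow> real \<Rightarrow> real" where
  "alo_inv G f e a = (THE b. b \<in> G \<and> f a b = e)"

text \<open>Intervals [a^-, a^+] are represented by the pair (a^-, a^+); their point set.\<close>
definition ivl :: "real \<times> real \<Rightarrow> real set" where
  "ivl p = {fst p..snd p}"

definition set_op :: "(real \<Rightarrow> real \<Rightarrow> real) \<Rightarrow> real set \<Rightarrow> real set \<Rightarrow> real set" where
  "set_op f A B = {f a b | a b. a \<in> A \<and> b \<in> B}"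

definition is_IPCM :: "real set \<Rightarrow> nat \<Rightarrow> (nat \<Rightarrow> nat \<Rightarrow> real \<times> real) \<Rightarrow> bool" where
  "is_IPCM G n A \<longleftrightarrow> (\<forall>i<n. \<forall>j<n. fst (A i j) \<in> G \<and> snd (A i j) \<in> G \<and> fst (A i j) \<le> snd (A i j))"

definition ipcm_reciprocal :: "real set \<Rightarrow> (real \<Rightarrow> real \<Rightarrow> real) \<Rightarrow> real \<Rightarrow> nat \<Rightarrow> (nat \<Rightarrow> nat \<Rightarrow> real \<times> real) \<Rightarrow> bool" where
  "ipcm_reciprocal G f e n A \<longleftrightarrow>
     (\<forall>i<n. \<forall>j<n. A j i = (alo_inv G f e (snd (A i j)), alo_inv G f e (fst (A i j))))"

definition pcm_consistent :: "(real \<Rightarrow> real \<Rightarrow> real) \<Rightarrow> nat \<Rightarrow> (nat \<Rightarrow> nat \<Rightarrow> real) \<Rightarrow> bool" where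
  "pcm_consistent f n c \<longleftrightarrow> (\<forall>i<n. \<forall>j<n. \<forall>k<n. c i k = f (c i j) (c j k))"

definition Lmat :: "real \<Rightarrow> (nat \<Rightarrow> nat \<Rightarrow> real \<times> real) \<Rightarrow> (nat \<Rightarrow> nat) \<Rightarrow> nat \<Rightarrow> nat \<Rightarrow> real" where
  "Lmat e A \<sigma> i j = (if i < j then fst (A (\<sigma> i) (\<sigma> j)) else if i = j then e else snd (A (\<sigma> i) (\<sigma> j)))"

definition Rmat :: "real \<Rightarrow> (nat \<Rightarrow> nat \<Rightarrow> real \<times> real) \<Rightarrow> (nat \<Rightarrow> nat) \<Rightarrow> nat \<Rightarrow> nat \<Rightarrow> real" where
  "Rmat e A \<sigma> i j = (if i < j then snd (A (\<sigma> i) (\<sigma> j)) else if i = j then e else fst (A (\<sigma> i) (\<sigma> j)))"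

definition liu_consistent :: "(real \<Rightarrow> real \<Rightarrow> real) \<Rightarrow> real \<Rightarrow> nat \<Rightarrow> (nat \<Rightarrow> nat \<Rightarrow> real \<times> real) \<Rightarrow> bool" where
  "liu_consistent f e n A \<longleftrightarrow> pcm_consistent f n (Lmat e A id) \<and> pcm_consistent f n (Rmat e A id)"

definition approx_consistent :: "(real \<Rightarrow> real \<Rightarrow> real) \<Rightarrow> real \<Rightarrow> nat \<Rightarrow> (nat \<Rightarrow> nat \<Rightarrow> real \<times> real) \<Rightarrow> bool" where
  "approx_consistent f e n A \<longleftrightarrow>
     (\<exists>\<sigma>. \<sigma> permutes {..<n} \<and> pcm_consistent f n (Lmat e A \<sigma>) \<and> pcm_consistent f n (Rmat e A \<sigma>))"

definition ipcm_consistent :: "(real \<Rightarrow> real \<Rightarrow> real) \<Rightarrow> nat \<Rightarrow> (nat \<Rightarrow> nat \<Rightarrow> real \<times> real) \<Rightarrow> bool" where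
  "ipcm_consistent f n A \<longleftrightarrow> (\<forall>i<n. \<forall>j<n. \<forall>k<n.
     set_op f (set_op f (ivl (A i j)) (ivl (A j k))) (ivl (A k i)) =
     set_op f (set_op f (ivl (A i k)) (ivl (A k j))) (ivl (A j i)))"

end

theory Submission
  imports Defs "HOL-Algebra.Group"
begin

text \<open>Write \<open>w\<^sub>i\<^sub>j = a\<^sup>-\<^sub>i\<^sub>j \<odot> a\<^sup>+\<^sub>i\<^sub>j\<close>. Entrywise, \<open>L\<^sup>\<sigma> \<odot> R\<^sup>\<sigma>\<close> is \<open>w\<close> with rows and columns permuted
  by \<open>\<sigma>\<close> (on the diagonal both sides are \<open>e\<close> by reciprocity), so consistency of \<open>L\<^sup>\<sigma>\<close> and \<open>R\<^sup>\<sigma>\<close>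
  makes \<open>w\<close> consistent. By continuity and monotonicity, a product of intervals of \<open>G\<close> is the
  interval between the products of the endpoints, and by reciprocity the endpoints of both
  sides of the \<open>[\<G>]\<close>-consistency equation agree precisely when \<open>w\<^sub>i\<^sub>j \<odot> w\<^sub>j\<^sub>k = w\<^sub>i\<^sub>k\<close>.\<close>

definition alo_monoid :: "real set \<Rightarrow> (real \<Rightarrow> real \<Rightarrow> real) \<Rightarrow> real \<Rightarrow> real monoid" where
  "alo_monoid G f e = \<lparr>carrier = G, mult = f, one = e\<rparr>"

lemma real_alo_groupD:
  assumes "real_alo_group G f e"
  shows real_alo_group_closed: "\<And>a b. a \<in> G \<Longrightarrow> b \<in> G \<Longrightarrow> f a b \<in> G"
    and real_alo_group_assoc: "\<And>a b c. a \<in> G \<Longrightarrow> b \<in> G \<Longrightarrow> c \<in> G \<Longrightarrow> f (f a b) c = f a (f b c)"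
    and real_alo_group_commute: "\<And>a b. a \<in> G \<Longrightarrow> b \<in> G \<Longrightarrow> f a b = f b a"
    and real_alo_group_unit: "e \<in> G" "\<And>a. a \<in> G \<Longrightarrow> f a e = a"
    and real_alo_group_inverse: "\<And>a. a \<in> G \<Longrightarrow> \<exists>b\<in>G. f a b = e"
    and real_alo_group_mono: "\<And>a b c. a \<in> G \<Longrightarrow> b \<in> G \<Longrightarrow> c \<in> G \<Longrightarrow> a \<le> b \<Longrightarrow> f a c \<le> f b c"
  using assms unfolding real_alo_group_def by blast+

lemma alo_monoid_simps [simp]:
  "carrier (alo_monoid G f e) = G"
  "x \<otimes>\<^bsub>alo_monoid G f e\<^esub> y = f x y"
  "\<one>\<^bsub>alo_monoid G f e\<^esub> = e"
  by (simp_all add: alo_monoid_def)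

lemma comm_group_alo_monoid:
  assumes "real_alo_group G f e"
  shows "comm_group (alo_monoid G f e)"
proof (rule comm_groupI, simp_all)
  fix x assume "x \<in> G"
  then show "f e x = x" and "\<exists>y\<in>G. f y x = e"
    using real_alo_groupD[OF assms] by metis+
qed (use real_alo_groupD[OF assms] in blast)+

lemma alo_inv_eq_m_inv:
  assumes "real_alo_group G f e" and "a \<in> G"
  shows "alo_inv G f e a = inv\<^bsub>alo_monoid G f e\<^esub> a"
proof -
  interpret M: comm_group "alo_monoid G f e"
    using assms(1) by (rule comm_group_alo_monoid)
  show ?thesis
    unfolding alo_inv_def
  proof (rule the_equality)
    fix b assume "b \<in> G \<and> f a b = e"
    then have "b \<in> G" and "f b a = e"
      using assms real_alo_group_commute by metis+
    then show "b = inv\<^bsub>alo_monoid G f e\<^esub> a"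
      using assms(2) M.inv_equality[of b a] by simp
  qed (use assms(2) M.r_inv[of a] M.inv_closed[of a] in simp)
qed

lemma (in comm_group) m_swap:
  assumes "a \<in> carrier G" "b \<in> carrier G" "c \<in> carrier G" "d \<in> carrier G"
  shows "a \<otimes> b \<otimes> (c \<otimes> d) = a \<otimes> c \<otimes> (b \<otimes> d)"
  using assms by (simp add: m_ac)

lemma (in comm_group) mult_inv_eq_mult_inv_inv:
  assumes "a \<in> carrier G" "b \<in> carrier G" "c \<in> carrier G"
    and "x \<in> carrier G" "y \<in> carrier G" "z \<in> carrier G"
    and "a \<otimes> z \<otimes> (b \<otimes> y) = x \<otimes> c"
  shows "a \<otimes> b \<otimes> inv c = x \<otimes> inv y \<otimes> inv z"
proof -
  have "x \<otimes> inv y \<otimes> inv z \<otimes> c = x \<otimes> c \<otimes> inv (z \<otimes> y)"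
    using assms(1-6) by (simp add: inv_mult m_ac)
  also have "\<dots> = a \<otimes> b \<otimes> (z \<otimes> y) \<otimes> inv (z \<otimes> y)"
    using assms by (simp flip: assms(7) add: m_ac)
  also have "\<dots> = a \<otimes> b"
    using assms(1-6) by (simp add: m_assoc)
  finally show ?thesis
    using assms(1-6) by (simp add: inv_solve_right')
qed

lemma alo_mult_mono:
  assumes "real_alo_group G f e" and "a \<in> G" "b \<in> G" "c \<in> G" "d \<in> G"
    and "a \<le> b" "c \<le> d"
  shows "f a c \<le> f b d"
proof -
  have "f a c \<le> f b c"
    by (rule real_alo_group_mono[OF assms(1,2,3,4,6)])
  also have "\<dots> = f c b"
    by (rule real_alo_group_commute[OF assms(1,3,4)])
  also have "\<dots> \<le> f d b"
    by (rule real_alo_group_mono[OF assms(1,4,5,3,7)])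
  also have "\<dots> = f b d"
    by (rule real_alo_group_commute[OF assms(1,5,3)])
  finally show ?thesis .
qed

lemma set_op_atLeastAtMost:
  assumes alo: "real_alo_group G f e" and cont: "continuous_alo G f" and "is_interval G"
    and G: "a \<in> G" "b \<in> G" "c \<in> G" "d \<in> G" and "a \<le> b" "c \<le> d"
  shows "set_op f {a..b} {c..d} = {f a c..f b d}"
proof -
  define h where "h = (\<lambda>(x::real, y::real). f x y)"
  let ?R = "{a..b} \<times> {c..d}"
  have sub: "{a..b} \<subseteq> G" "{c..d} \<subseteq> G"
    using mem_is_interval_1_I[OF \<open>is_interval G\<close>] G by (meson atLeastAtMost_iff subsetI)+
  then have R_sub: "?R \<subseteq> G \<times> G"
    by blast
  have image: "set_op f {a..b} {c..d} = h ` ?R"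
    unfolding set_op_def h_def by fastforce
  have "h ` ?R \<subseteq> {f a c..f b d}"
  proof (clarsimp simp: h_def)
    fix x y assume xy: "a \<le> x" "x \<le> b" "c \<le> y" "y \<le> d"
    then have "x \<in> G" "y \<in> G"
      using sub by auto
    then show "f a c \<le> f x y \<and> f x y \<le> f b d"
      using alo_mult_mono[OF alo] G xy by blast
  qed
  moreover have "{f a c..f b d} \<subseteq> h ` ?R"
  proof -
    have "continuous_on ?R h"
      using cont R_sub unfolding continuous_alo_def h_def by (rule continuous_on_subset)
    then have "connected (h ` ?R)"
      by (simp add: connected_Times connected_continuous_image)
    then have "is_interval (h ` ?R)"
      by (simp only: is_interval_connected_1)
    moreover have "f a c \<in> h ` ?R" "f b d \<in> h ` ?R"
      using \<open>a \<le> b\<close> \<open>c \<le> d\<close> by (force simp: h_def)+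
    ultimately show ?thesis
      by (auto dest: mem_is_interval_1_I)
  qed
  ultimately show ?thesis
    using image by blast
qed

definition ipcm_endpoint_prod :: "(real \<Rightarrow> real \<Rightarrow> real) \<Rightarrow> (nat \<Rightarrow> nat \<Rightarrow> real \<times> real) \<Rightarrow> nat \<Rightarrow> nat \<Rightarrow> real" where
  "ipcm_endpoint_prod f A i j = f (fst (A i j)) (snd (A i j))"

lemma pcm_consistent_cong:
  assumes "\<And>i j. i < n \<Longrightarrow> j < n \<Longrightarrow> c i j = d i j"
  shows "pcm_consistent f n c = pcm_consistent f n d"
  using assms unfolding pcm_consistent_def by auto

lemma pcm_consistent_permute:
  assumes "\<sigma> permutes {..<n}" and "pcm_consistent f n (\<lambda>p q. c (\<sigma> p) (\<sigma> q))"
  shows "pcm_consistent f n c"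
  unfolding pcm_consistent_def
proof (intro allI impI)
  fix i j k assume "i < n" "j < n" "k < n"
  moreover have "\<exists>p<n. \<sigma> p = x" if "x < n" for x
    using permutes_image[OF assms(1)] that by (metis imageE lessThan_iff)
  ultimately show "c i k = f (c i j) (c j k)"
    using assms(2) unfolding pcm_consistent_def by metis
qed

lemma pcm_consistent_mult:
  assumes "real_alo_group G f e" and "pcm_consistent f n c" and "pcm_consistent f n d"
    and "\<And>i j. i < n \<Longrightarrow> j < n \<Longrightarrow> c i j \<in> G \<and> d i j \<in> G"
  shows "pcm_consistent f n (\<lambda>i j. f (c i j) (d i j))"
  unfolding pcm_consistent_def
proof (intro allI impI)
  interpret M: comm_group "alo_monoid G f e"
    using assms(1) by (rule comm_group_alo_monoid)
  fix i j k assume ijk: "i < n" "j < n" "k < n"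
  then have "c i k = f (c i j) (c j k)" and "d i k = f (d i j) (d j k)"
    using assms(2,3) unfolding pcm_consistent_def by blast+
  then have "f (c i k) (d i k) = f (f (c i j) (c j k)) (f (d i j) (d j k))"
    by (simp only:)
  also have "\<dots> = f (f (c i j) (d i j)) (f (c j k) (d j k))"
    using ijk assms(4) M.m_swap[of "c i j" "c j k" "d i j" "d j k"] by simp
  finally show "f (c i k) (d i k) = f (f (c i j) (d i j)) (f (c j k) (d j k))" .
qed

lemma ipcm_endpoint_prod_diag:
  assumes "real_alo_group G f e" and "is_IPCM G n A" and "ipcm_reciprocal G f e n A" and "i < n"
  shows "ipcm_endpoint_prod f A i i = e"
proof -
  interpret M: comm_group "alo_monoid G f e"
    using assms(1) by (rule comm_group_alo_monoid)
  have "snd (A i i) \<in> G"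
    using assms(2,4) unfolding is_IPCM_def by blast
  moreover have "fst (A i i) = alo_inv G f e (snd (A i i))"
    using assms(3,4) unfolding ipcm_reciprocal_def by (metis fst_conv)
  ultimately show ?thesis
    using M.l_inv[of "snd (A i i)"] by (simp add: ipcm_endpoint_prod_def alo_inv_eq_m_inv[OF assms(1)])
qed

lemma Lmat_Rmat_in_carrier:
  assumes "is_IPCM G n A" and "e \<in> G" and "\<sigma> p < n" "\<sigma> q < n"
  shows "Lmat e A \<sigma> p q \<in> G" and "Rmat e A \<sigma> p q \<in> G"
  using assms unfolding is_IPCM_def Lmat_def Rmat_def by auto

lemma Lmat_mult_Rmat:
  assumes "real_alo_group G f e" and "is_IPCM G n A" and "ipcm_reciprocal G f e n A"
    and "\<sigma> p < n" "\<sigma> q < n"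
  shows "f (Lmat e A \<sigma> p q) (Rmat e A \<sigma> p q) = ipcm_endpoint_prod f A (\<sigma> p) (\<sigma> q)"
proof (cases rule: linorder_cases[of p q])
  case less
  then show ?thesis
    by (simp add: Lmat_def Rmat_def ipcm_endpoint_prod_def)
next
  case equal
  then show ?thesis
    using assms ipcm_endpoint_prod_diag real_alo_group_unit[OF assms(1)] by (simp add: Lmat_def Rmat_def)
next
  case greater
  moreover have "fst (A (\<sigma> p) (\<sigma> q)) \<in> G" "snd (A (\<sigma> p) (\<sigma> q)) \<in> G"
    using assms(2,4,5) unfolding is_IPCM_def by blast+
  ultimately show ?thesis
    using real_alo_group_commute[OF assms(1)] by (simp add: Lmat_def Rmat_def ipcm_endpoint_prod_def)
qed

lemma approx_consistent_imp_endpoint_prod_consistent: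
  assumes "real_alo_group G f e" and "is_IPCM G n A" and "ipcm_reciprocal G f e n A"
    and "approx_consistent f e n A"
  shows "pcm_consistent f n (ipcm_endpoint_prod f A)"
proof -
  obtain \<sigma> where \<sigma>: "\<sigma> permutes {..<n}"
    and L: "pcm_consistent f n (Lmat e A \<sigma>)" and R: "pcm_consistent f n (Rmat e A \<sigma>)"
    using assms(4) unfolding approx_consistent_def by blast
  have \<sigma>_less: "\<sigma> p < n" if "p < n" for p
    using permutes_in_image[OF \<sigma>] that by simp
  have "pcm_consistent f n (\<lambda>p q. f (Lmat e A \<sigma> p q) (Rmat e A \<sigma> p q))"
    using assms(1) L R
    by (rule pcm_consistent_mult)
       (use assms(2) \<sigma>_less Lmat_Rmat_in_carrier real_alo_group_unit(1)[OF assms(1)] in auto)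
  moreover have "pcm_consistent f n (\<lambda>p q. f (Lmat e A \<sigma> p q) (Rmat e A \<sigma> p q)) =
      pcm_consistent f n (\<lambda>p q. ipcm_endpoint_prod f A (\<sigma> p) (\<sigma> q))"
    using Lmat_mult_Rmat[OF assms(1-3)] \<sigma>_less by (intro pcm_consistent_cong) simp
  ultimately have "pcm_consistent f n (\<lambda>p q. ipcm_endpoint_prod f A (\<sigma> p) (\<sigma> q))"
    by blast
  then show ?thesis
    using \<sigma> by (rule pcm_consistent_permute[rotated])
qed

lemma alo_mult_inv_eq_mult_inv_inv:
  assumes "real_alo_group G f e" and "a \<in> G" "b \<in> G" "c \<in> G" "x \<in> G" "y \<in> G" "z \<in> G"
    and "f (f a z) (f b y) = f x c"
  shows "f (f a b) (alo_inv G f e c) = f (f x (alo_inv G f e y)) (alo_inv G f e z)"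
proof -
  interpret M: comm_group "alo_monoid G f e"
    using assms(1) by (rule comm_group_alo_monoid)
  show ?thesis
    using M.mult_inv_eq_mult_inv_inv[of a b c x y z] assms
    by (simp add: alo_inv_eq_m_inv[OF assms(1)])
qed

lemma set_op_atLeastAtMost3:
  assumes "real_alo_group G f e" and "continuous_alo G f" and "is_interval G"
    and "a \<in> G" "b \<in> G" "c \<in> G" "d \<in> G" "x \<in> G" "y \<in> G"
    and "a \<le> b" "c \<le> d" "x \<le> y"
  shows "set_op f (set_op f {a..b} {c..d}) {x..y} = {f (f a c) x..f (f b d) y}"
proof -
  have "set_op f {a..b} {c..d} = {f a c..f b d}"
    using assms by (intro set_op_atLeastAtMost)
  moreover have "f a c \<in> G" "f b d \<in> G" "f a c \<le> f b d"
    using assms real_alo_group_closed alo_mult_mono by blast+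
  ultimately show ?thesis
    using assms by (simp add: set_op_atLeastAtMost)
qed

lemma endpoint_prod_consistent_imp_ipcm_consistent:
  assumes alo: "real_alo_group G f e" and cont: "continuous_alo G f" and "is_interval G"
    and ipcm: "is_IPCM G n A" and rec: "ipcm_reciprocal G f e n A"
    and consistent: "pcm_consistent f n (ipcm_endpoint_prod f A)"
  shows "ipcm_consistent f n A"
  unfolding ipcm_consistent_def
proof (intro allI impI)
  fix i j k assume ijk: "i < n" "j < n" "k < n"
  define l where "l x y = fst (A x y)" for x y
  define h where "h x y = snd (A x y)" for x y
  let ?inv = "alo_inv G f e"
  have G: "l x y \<in> G" "h x y \<in> G" "l x y \<le> h x y" if "x < n" "y < n" for x y
    using ipcm that unfolding is_IPCM_def l_def h_def by blast+
  have swapped: "l y x = ?inv (h x y)" "h y x = ?inv (l x y)" if "x < n" "y < n" for x y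
    using rec that unfolding ipcm_reciprocal_def l_def h_def by (metis fst_conv snd_conv)+
  have cycle: "set_op f (set_op f (ivl (A x y)) (ivl (A y z))) (ivl (A z x))
      = {f (f (l x y) (l y z)) (l z x)..f (f (h x y) (h y z)) (h z x)}"
    if "x < n" "y < n" "z < n" for x y z
    unfolding ivl_def l_def[symmetric] h_def[symmetric] fst_conv snd_conv
    using that G by (intro set_op_atLeastAtMost3[OF alo cont \<open>is_interval G\<close>]) auto
  have endpoint_prod_ijk: "f (f (l i j) (h i j)) (f (l j k) (h j k)) = f (l i k) (h i k)"
    using consistent ijk unfolding pcm_consistent_def ipcm_endpoint_prod_def l_def h_def by metis
  then have "f (f (l i j) (l j k)) (l k i) = f (f (l i k) (l k j)) (l j i)"
    unfolding swapped[OF ijk(1,3)] swapped[OF ijk(2,3)] swapped[OF ijk(1,2)]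
    using ijk G by (intro alo_mult_inv_eq_mult_inv_inv[OF alo]) auto
  moreover have "f (f (h i j) (l i j)) (f (h j k) (l j k)) = f (h i k) (l i k)"
    using endpoint_prod_ijk ijk G real_alo_group_commute[OF alo] by metis
  then have "f (f (h i j) (h j k)) (h k i) = f (f (h i k) (h k j)) (h j i)"
    unfolding swapped[OF ijk(1,3)] swapped[OF ijk(2,3)] swapped[OF ijk(1,2)]
    using ijk G by (intro alo_mult_inv_eq_mult_inv_inv[OF alo]) auto
  ultimately show "set_op f (set_op f (ivl (A i j)) (ivl (A j k))) (ivl (A k i)) =
      set_op f (set_op f (ivl (A i k)) (ivl (A k j))) (ivl (A j i))"
    using cycle[of i j k] cycle[of i k j] ijk by simp
qed

theorem proposition12:
  fixes G :: "real set" and f :: "real \<Rightarrow> real \<Rightarrow> real" and e :: real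
    and n :: nat and A :: "nat \<Rightarrow> nat \<Rightarrow> real \<times> real"
  assumes "real_alo_group G f e" and "continuous_alo G f" and "open_real_interval G"
    and "is_IPCM G n A" and "ipcm_reciprocal G f e n A"
  shows "(liu_consistent f e n A \<longrightarrow> approx_consistent f e n A) \<and>
         (approx_consistent f e n A \<longrightarrow> ipcm_consistent f n A)"
proof (intro conjI impI)
  assume "liu_consistent f e n A"
  then show "approx_consistent f e n A"
    unfolding liu_consistent_def approx_consistent_def using permutes_id by blast
next
  assume "approx_consistent f e n A"
  then have "pcm_consistent f n (ipcm_endpoint_prod f A)"
    using assms(1,4,5) by (intro approx_consistent_imp_endpoint_prod_consistent)
  moreover have "is_interval G"
    using assms(3) unfolding open_real_interval_def by blast
  ultimately show "ipcm_consistent f n A"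
    using assms(1,2,4,5) by (intro endpoint_prod_consistent_imp_ipcm_consistent)
qed

end
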